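(* Consider EF-BV with $R$ proper closed convex and $f$ $L$-smooth. For every $t\ge0$, with $u^{t+1}=\frac1\gamma(x^t-x^{t+1})-g^{t+1}$ (which belongs to $\partial R(x^{t+1})$), $$f(x^{t+1})+R(x^{t+1})\le f(x^t)+R(x^t)+\frac\gamma2\|\nabla f(x^t)-g^{t+1}\|^2+\Big(\frac L2-\frac1{2\gamma}+\frac{\gamma L^2}{2}\Big)\|x^{t+1}-x^t\|^2-\frac\gamma4\|\nabla f(x^{t+1})+u^{t+1}\|^2 .$$
   Context: $f:\mathbb{R}^d\to\mathbb{R}$ is differentiable with $L$-Lipschitz gradient; $R:\mathbb{R}^d\to\mathbb{R}\cup\{+\infty\}$ proper closed convex, $\mathrm{prox}_{\gamma R}(x)=\arg\min_y(\gamma R(y)+\frac12\|x-y\|^2)$, $\gamma>0$. In EF-BV the iterates satisfy $x^{t+1}=\mathrm{prox}_{\gamma R}(x^t-\gamma g^{t+1})$, where $g^{t+1}\in\mathbb{R}^d$ is the (arbitrary, possibly random) gradient estimate computed at iteration $t$; the inequality holds pointwise for any such $x^t$, $g^{t+1}$, $x^{t+1}$ with $x^t$ in the domain of $R$. *)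

theory Defs
  imports "HOL-Analysis.Analysis" "HOL-Library.Extended_Real"
begin

definition epigraph_e :: "('a::real_vector \<Rightarrow> ereal) \<Rightarrow> ('a \<times> real) set" where
  "epigraph_e R = {(x, r). R x \<le> ereal r}"

definition proper_fun :: "('a \<Rightarrow> ereal) \<Rightarrow> bool" where
  "proper_fun R \<longleftrightarrow> (\<forall>x. R x \<noteq> -\<infinity>) \<and> (\<exists>x. R x \<noteq> \<infinity>)"

definition closed_fun :: "('a::real_normed_vector \<Rightarrow> ereal) \<Rightarrow> bool" where
  "closed_fun R \<longleftrightarrow> closed (epigraph_e R)"

definition convex_fun :: "('a::real_vector \<Rightarrow> ereal) \<Rightarrow> bool" where
  "convex_fun R \<longleftrightarrow> convex (epigraph_e R)"

definition is_prox :: "real \<Rightarrow> ('a::real_normed_vector \<Rightarrow> ereal) \<Rightarrow> 'a \<Rightarrow> 'a \<Rightarrow> bool" where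
  "is_prox \<gamma> R x p \<longleftrightarrow>
     (\<forall>y. ereal \<gamma> * R p + ereal ((norm (x - p))\<^sup>2 / 2) \<le> ereal \<gamma> * R y + ereal ((norm (x - y))\<^sup>2 / 2))"

end

theory Submission
  imports Defs
begin

text \<open>The descent lemma bounds \<open>f(x\<^sup>+)\<close> by its quadratic model
at \<open>x\<close>. Optimality of the proximal point \<open>x\<^sup>+\<close> against the segment towards \<open>x\<close>, together
with convexity of \<open>R\<close>, gives the subgradient inequality
\<open>R(x\<^sup>+) \<le> R(x) - \<langle>u, x - x\<^sup>+\<rangle>\<close> for \<open>u = (x - x\<^sup>+)/\<gamma> - g\<close>. Adding the two leaves a term
\<open>\<langle>\<nabla>f(x) - g, x\<^sup>+ - x\<rangle>\<close>, which is traded for \<open>\<gamma>/2 \<parallel>\<nabla>f(x) - g\<parallel>\<^sup>2\<close> and a quadratic in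
\<open>\<parallel>x\<^sup>+ - x\<parallel>\<close> minus the residual \<open>\<gamma>/4 \<parallel>\<nabla>f(x\<^sup>+) + u\<parallel>\<^sup>2\<close>, using
\<open>\<parallel>p + q\<parallel>\<^sup>2 \<le> 2\<parallel>p\<parallel>\<^sup>2 + 2\<parallel>q\<parallel>\<^sup>2\<close> and the Lipschitz bound on \<open>\<nabla>f(x\<^sup>+) - \<nabla>f(x)\<close>.\<close>

lemma lipschitz_gradient_quadratic_upper_bound:
  fixes f :: "'a::real_inner \<Rightarrow> real" and grad :: "'a \<Rightarrow> 'a"
  assumes grad: "\<And>x. (f has_derivative (\<lambda>h. grad x \<bullet> h)) (at x)"
    and Lip: "\<And>x y. norm (grad x - grad y) \<le> L * norm (x - y)"
  shows "f y \<le> f x + grad x \<bullet> (y - x) + L / 2 * (norm (y - x))\<^sup>2"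
proof -
  define d where "d = y - x"
  define \<phi> where "\<phi> s = f (x + s *\<^sub>R d) - s * (grad x \<bullet> d) - L * s\<^sup>2 / 2 * (norm d)\<^sup>2" for s
  have "\<phi> 1 \<le> \<phi> 0"
  proof (rule DERIV_nonpos_imp_nonincreasing[of 0 1])
    fix s :: real assume s: "0 \<le> s" "s \<le> 1"
    have "((\<lambda>s. x + s *\<^sub>R d) has_derivative (\<lambda>h. h *\<^sub>R d)) (at s)"
      by (auto intro!: derivative_eq_intros)
    from has_derivative_compose[OF this grad]
    have "((\<lambda>s. f (x + s *\<^sub>R d)) has_derivative (\<lambda>h. grad (x + s *\<^sub>R d) \<bullet> (h *\<^sub>R d))) (at s)"
      by (simp add: o_def)
    then have f_along: "((\<lambda>s. f (x + s *\<^sub>R d)) has_real_derivative (grad (x + s *\<^sub>R d) \<bullet> d)) (at s)"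
      unfolding has_field_derivative_def by (simp add: mult.commute[of _ "grad _ \<bullet> d"])
    have D: "(\<phi> has_real_derivative
        (grad (x + s *\<^sub>R d) \<bullet> d - grad x \<bullet> d - L * s * (norm d)\<^sup>2)) (at s)"
      unfolding \<phi>_def by (rule f_along derivative_eq_intros refl | simp)+
    have "grad (x + s *\<^sub>R d) \<bullet> d - grad x \<bullet> d = (grad (x + s *\<^sub>R d) - grad x) \<bullet> d"
      by (simp add: inner_diff_left)
    also have "\<dots> \<le> norm (grad (x + s *\<^sub>R d) - grad x) * norm d"
      by (rule norm_cauchy_schwarz)
    also have "\<dots> \<le> L * norm (s *\<^sub>R d) * norm d"
      using Lip[of "x + s *\<^sub>R d" x] by (simp add: mult_right_mono)
    also have "\<dots> = L * s * (norm d)\<^sup>2"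
      using s by (simp add: power2_eq_square)
    finally show "\<exists>y. (\<phi> has_real_derivative y) (at s) \<and> y \<le> 0"
      using D by auto
  qed simp
  then show ?thesis
    unfolding \<phi>_def d_def by (simp add: algebra_simps)
qed

lemma convex_fun_combination_le:
  assumes "convex_fun R" "R x = ereal a" "R y = ereal b" "0 \<le> t" "t \<le> 1"
  shows "R ((1 - t) *\<^sub>R x + t *\<^sub>R y) \<le> ereal ((1 - t) * a + t * b)"
proof -
  have "(x, a) \<in> epigraph_e R" "(y, b) \<in> epigraph_e R"
    using assms(2,3) by (auto simp: epigraph_e_def)
  from convexD[OF assms(1)[unfolded convex_fun_def] this, of "1 - t" t] assms(4,5)
  show ?thesis
    by (simp add: epigraph_e_def)
qed

lemma prox_finite:
  assumes "is_prox \<gamma> R x p" "proper_fun R" "\<gamma> > 0" "R y \<noteq> \<infinity>"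
  obtains r where "R p = ereal r"
proof -
  have "R y \<noteq> -\<infinity>" "R p \<noteq> -\<infinity>"
    using assms(2) by (auto simp: proper_fun_def)
  moreover have "ereal \<gamma> * R p + ereal ((norm (x - p))\<^sup>2 / 2)
      \<le> ereal \<gamma> * R y + ereal ((norm (x - y))\<^sup>2 / 2)"
    using assms(1) by (auto simp: is_prox_def)
  ultimately have "R p \<noteq> \<infinity>"
    using assms(3,4) by (cases "R y") auto
  with \<open>R p \<noteq> -\<infinity>\<close> show thesis
    using that by (cases "R p") auto
qed

text \<open>Comparing \<open>p\<close> with \<open>p + t(y - p)\<close> and letting \<open>t \<rightarrow> 0\<close>: the first-order optimality
condition of the proximal problem, i.e. \<open>(x - p)/\<gamma> \<in> \<partial>R(p)\<close>.\<close>
lemma prox_subgradient_inequality: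
  assumes prox: "is_prox \<gamma> R x p" and conv: "convex_fun R" and gamma: "\<gamma> > 0"
    and Rp: "R p = ereal rp" and Ry: "R y = ereal r"
  shows "\<gamma> * rp \<le> \<gamma> * r + (x - p) \<bullet> (p - y)"
proof (rule field_le_epsilon)
  define d where "d = y - p"
  have segment: "\<gamma> * rp \<le> \<gamma> * r + (x - p) \<bullet> (p - y) + t * ((norm d)\<^sup>2 / 2)"
    if t: "0 < t" "t \<le> 1" for t
  proof -
    define z where "z = (1 - t) *\<^sub>R p + t *\<^sub>R y"
    have Rz: "R z \<le> ereal ((1 - t) * rp + t * r)"
      unfolding z_def using convex_fun_combination_le[OF conv Rp Ry] t by simp
    have "ereal (\<gamma> * rp + (norm (x - p))\<^sup>2 / 2) \<le> ereal \<gamma> * R z + ereal ((norm (x - z))\<^sup>2 / 2)"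
      using prox Rp by (simp add: is_prox_def)
    also have "\<dots> \<le> ereal \<gamma> * ereal ((1 - t) * rp + t * r) + ereal ((norm (x - z))\<^sup>2 / 2)"
      using Rz gamma by (intro add_right_mono ereal_mult_left_mono) auto
    finally have "\<gamma> * rp + (norm (x - p))\<^sup>2 / 2 \<le> \<gamma> * ((1 - t) * rp + t * r) + (norm (x - z))\<^sup>2 / 2"
      by simp
    moreover have "(norm (x - z))\<^sup>2 = (norm (x - p))\<^sup>2 - 2 * t * ((x - p) \<bullet> d) + t\<^sup>2 * (norm d)\<^sup>2"
    proof -
      have xz: "x - z = (x - p) - t *\<^sub>R d"
        by (simp add: z_def d_def algebra_simps)
      show ?thesis
        unfolding xz power2_norm_eq_inner
        by (simp add: inner_diff_left inner_diff_right inner_commute algebra_simps power2_eq_square)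
    qed
    ultimately have "t * (\<gamma> * rp) \<le> t * (\<gamma> * r + (x - p) \<bullet> (p - y) + t * ((norm d)\<^sup>2 / 2))"
      by (simp add: d_def inner_diff_right algebra_simps power2_eq_square)
    with t show ?thesis
      by simp
  qed
  fix e :: real assume "0 < e"
  define c where "c = (norm d)\<^sup>2 / 2 + 1"
  have "c > 0"
    unfolding c_def by (intro add_nonneg_pos) auto
  define t where "t = min 1 (e / c)"
  have t: "0 < t" "t \<le> 1"
    using \<open>0 < e\<close> \<open>c > 0\<close> by (auto simp: t_def)
  have "t * ((norm d)\<^sup>2 / 2) \<le> e / c * c"
    unfolding t_def c_def using \<open>0 < e\<close> \<open>c > 0\<close> by (intro mult_mono) (auto simp: c_def)
  also have "\<dots> = e"
    using \<open>c > 0\<close> by simp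
  finally show "\<gamma> * rp \<le> \<gamma> * r + (x - p) \<bullet> (p - y) + e"
    using segment[OF t] by linarith
qed

text \<open>With \<open>a = \<nabla>f(x) - g\<close>, \<open>d = x\<^sup>+ - x\<close> and \<open>b = \<nabla>f(x\<^sup>+) - \<nabla>f(x)\<close>, the vector
\<open>a - d/\<gamma> + b\<close> is \<open>\<nabla>f(x\<^sup>+) + u\<close>.\<close>
lemma residual_norm_bound:
  fixes a b d :: "'a::real_inner"
  assumes gamma: "\<gamma> > 0" and b: "norm b \<le> L * norm d"
  shows "\<gamma> / 4 * (norm (a - (1 / \<gamma>) *\<^sub>R d + b))\<^sup>2
    \<le> \<gamma> / 2 * (norm a)\<^sup>2 - a \<bullet> d + (norm d)\<^sup>2 / (2 * \<gamma>) + \<gamma> * L\<^sup>2 / 2 * (norm d)\<^sup>2"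
proof -
  define p where "p = a - (1 / \<gamma>) *\<^sub>R d"
  have "(norm (p + b))\<^sup>2 \<le> 2 * (norm p)\<^sup>2 + 2 * (norm b)\<^sup>2"
  proof -
    have "0 \<le> (norm (p - b))\<^sup>2" by simp
    then show ?thesis
      unfolding power2_norm_eq_inner
      by (simp add: inner_add_left inner_add_right inner_diff_left inner_diff_right inner_commute)
  qed
  also have "(norm b)\<^sup>2 \<le> L\<^sup>2 * (norm d)\<^sup>2"
    using power_mono[OF b norm_ge_zero, of 2] by (simp add: power_mult_distrib)
  finally have "\<gamma> / 4 * (norm (p + b))\<^sup>2 \<le> \<gamma> / 4 * (2 * (norm p)\<^sup>2 + 2 * (L\<^sup>2 * (norm d)\<^sup>2))"
    using gamma by (intro mult_left_mono) auto
  then have "\<gamma> / 4 * (norm (p + b))\<^sup>2 \<le> \<gamma> / 2 * (norm p)\<^sup>2 + \<gamma> * L\<^sup>2 / 2 * (norm d)\<^sup>2"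
    by (simp add: algebra_simps)
  moreover have "\<gamma> / 2 * (norm p)\<^sup>2 = \<gamma> / 2 * (norm a)\<^sup>2 - a \<bullet> d + (norm d)\<^sup>2 / (2 * \<gamma>)"
    unfolding p_def power2_norm_eq_inner using gamma
    by (simp add: inner_diff_left inner_diff_right inner_commute field_simps power2_eq_square)
  ultimately show ?thesis
    by (simp add: p_def)
qed

theorem mainTheorem14:
  fixes f :: "'a::euclidean_space \<Rightarrow> real" and grad :: "'a \<Rightarrow> 'a"
    and R :: "'a \<Rightarrow> ereal" and L \<gamma> :: real and xt g xt1 :: 'a
  assumes grad: "\<And>x. (f has_derivative (\<lambda>h. grad x \<bullet> h)) (at x)"
    and Lip: "\<And>x y. norm (grad x - grad y) \<le> L * norm (x - y)"
    and proper: "proper_fun R" and closedR: "closed_fun R" and convR: "convex_fun R"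
    and gamma: "\<gamma> > 0"
    and dom: "R xt \<noteq> \<infinity>"
    and step: "is_prox \<gamma> R (xt - \<gamma> *\<^sub>R g) xt1"
  shows "f xt1 + real_of_ereal (R xt1)
      \<le> f xt + real_of_ereal (R xt) + \<gamma> / 2 * (norm (grad xt - g))\<^sup>2
        + (L / 2 - 1 / (2 * \<gamma>) + \<gamma> * L\<^sup>2 / 2) * (norm (xt1 - xt))\<^sup>2
        - \<gamma> / 4 * (norm (grad xt1 + ((1 / \<gamma>) *\<^sub>R (xt - xt1) - g)))\<^sup>2"
proof -
  define d where "d = xt1 - xt"
  obtain r where r: "R xt = ereal r"
    using dom proper unfolding proper_fun_def by (cases "R xt") auto
  obtain rp where rp: "R xt1 = ereal rp"
    using prox_finite[OF step proper gamma dom] .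
  have "\<gamma> * rp \<le> \<gamma> * r + (xt - \<gamma> *\<^sub>R g - xt1) \<bullet> d"
    using prox_subgradient_inequality[OF step convR gamma rp r] by (simp add: d_def)
  also have "(xt - \<gamma> *\<^sub>R g - xt1) \<bullet> d = - (norm d)\<^sup>2 - \<gamma> * (g \<bullet> d)"
  proof -
    have "xt - \<gamma> *\<^sub>R g - xt1 = - d - \<gamma> *\<^sub>R g"
      by (simp add: d_def)
    then show ?thesis
      by (simp only:) (simp add: inner_diff_left power2_norm_eq_inner)
  qed
  also have "\<gamma> * r + (- (norm d)\<^sup>2 - \<gamma> * (g \<bullet> d)) = \<gamma> * (r - (norm d)\<^sup>2 / \<gamma> - g \<bullet> d)"
    using gamma by (simp add: algebra_simps)
  finally have prox: "rp \<le> r - (norm d)\<^sup>2 / \<gamma> - g \<bullet> d"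
    using gamma by simp
  have descent: "f xt1 \<le> f xt + grad xt \<bullet> d + L / 2 * (norm d)\<^sup>2"
    using lipschitz_gradient_quadratic_upper_bound[OF grad Lip] by (simp add: d_def)
  have "norm (grad xt1 - grad xt) \<le> L * norm d"
    using Lip by (simp add: d_def)
  from residual_norm_bound[OF gamma this, of "grad xt - g"]
  have "\<gamma> / 4 * (norm (grad xt1 + ((1 / \<gamma>) *\<^sub>R (xt - xt1) - g)))\<^sup>2
      \<le> \<gamma> / 2 * (norm (grad xt - g))\<^sup>2 - (grad xt - g) \<bullet> d + (norm d)\<^sup>2 / (2 * \<gamma>)
        + \<gamma> * L\<^sup>2 / 2 * (norm d)\<^sup>2"
    by (simp add: d_def algebra_simps)
  with prox descent show ?thesis
    unfolding r rp by (simp add: d_def[symmetric] inner_diff_left algebra_simps add_divide_distrib diff_divide_distrib)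
qed

end
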